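(* Let $f\in L^1(\mathbb{R})$ satisfy $\int_\mathbb{R}|y|^\epsilon|f(y)|\,\mathrm{d}y<\infty$ for some $\epsilon>0$, and for $k\in\mathbb{N}$ set $g_k(x):=(1+|x|^\epsilon)|f_k(x)|$. If for some $\overline{k}\in\mathbb{N}$ $$\sum_{m\in\mathbb{Z}}\sup_{z\in[m,m+1)}g_{\overline{k}}(z)<\infty,$$ then $\sum_{m\in\mathbb{Z}}\sup_{z\in[m,m+1)}g_k(z)<\infty$ for every $k\ge\overline{k}$.
   Context: $f_1:=f$, $f_{k+1}:=f_k*f$, i.e. $f_{k+1}(x)=\int_\mathbb{R} f_k(x-y)f(y)\,\mathrm{d}y$. *)

theory Defs
  imports "HOL-Analysis.Analysis"
begin

text \<open>Convolution powers: f_1 = f, f_(k+1)(x) = integral of f_k(x-y) f(y) dy.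
  Index 0 is not used (k ranges over positive naturals); we set it to f as well.\<close>
fun conv_pow :: "(real \<Rightarrow> real) \<Rightarrow> nat \<Rightarrow> real \<Rightarrow> real" where
  "conv_pow f 0 = f"
| "conv_pow f (Suc 0) = f"
| "conv_pow f (Suc (Suc k)) = (\<lambda>x. LINT y|lborel. conv_pow f (Suc k) (x - y) * f y)"

definition gfun :: "(real \<Rightarrow> real) \<Rightarrow> real \<Rightarrow> nat \<Rightarrow> real \<Rightarrow> real" where
  "gfun f \<epsilon> k x = (1 + \<bar>x\<bar> powr \<epsilon>) * \<bar>conv_pow f k x\<bar>"

end

theory Submission
  imports Defs
begin

(* Write w(x) = 1 + |x|^e and, for a function g, let
   cell_sup g m = sup of g over the unit cell [m, m+1) and
   amalgam g = sum over m in Z of cell_sup g m  (a Wiener amalgam norm).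
   The weight is submultiplicative up to a constant: w(z) <= 2^e w(z-y) w(y).
   Hence for z in the cell [m, m+1) the weighted convolution satisfies
     w(z) |(u*f)(z)| <= 2^e INT (w |u|)(z-y) (w |f|)(y) dy,
   and z-y lies in one of the two adjacent cells starting at floor(m-y).
   Summing over m and using translation invariance of the sum over Z gives
     amalgam (w |u*f|) <= 2^e * 2 * amalgam (w |u|) * INT w |f|.
   Since f_(k+1) = f_k * f for k >= 1 and INT w |f| < oo by hypothesis,
   finiteness of amalgam (w |f_k|) propagates from k to k+1, and the theorem
   follows by induction on k >= kbar. *)

definition cell_sup :: "(real \<Rightarrow> real) \<Rightarrow> int \<Rightarrow> ennreal" where
  "cell_sup g m = (SUP z\<in>{real_of_int m..<real_of_int m + 1}. ennreal (g z))"

definition amalgam :: "(real \<Rightarrow> real) \<Rightarrow> ennreal" where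
  "amalgam g = (\<Sum>\<^sub>\<infinity> m::int. cell_sup g m)"

lemma weight_submult:
  fixes z y e :: real assumes e: "e \<ge> 0"
  shows "1 + \<bar>z\<bar> powr e \<le> 2 powr e * ((1 + \<bar>z - y\<bar> powr e) * (1 + \<bar>y\<bar> powr e))"
proof -
  let ?a = "\<bar>z - y\<bar>" and ?b = "\<bar>y\<bar>"
  have "\<bar>z\<bar> \<le> ?a + ?b" using abs_triangle_ineq[of "z - y" y] by simp
  hence "\<bar>z\<bar> \<le> 2 * max ?a ?b"
    using max.cobounded1[of ?a ?b] max.cobounded2[of ?b ?a] by linarith
  hence "\<bar>z\<bar> powr e \<le> (2 * max ?a ?b) powr e" by (intro powr_mono2) (use e in auto)
  also have "\<dots> = 2 powr e * max ?a ?b powr e" by (simp add: powr_mult)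
  also have "max ?a ?b powr e \<le> ?a powr e + ?b powr e"
    by (cases "?a \<le> ?b") (auto simp: max_def)
  finally have pow: "\<bar>z\<bar> powr e \<le> 2 powr e * (?a powr e + ?b powr e)"
    by (simp add: mult_left_mono order_trans)
  have one: "1 \<le> 2 powr e" using e by (intro ge_one_powr_ge_zero) auto
  have "1 + \<bar>z\<bar> powr e \<le> 2 powr e * (1 + ?a powr e + ?b powr e)"
    using pow one by (simp add: algebra_simps)
  also have "\<dots> \<le> 2 powr e * ((1 + ?a powr e) * (1 + ?b powr e))"
    by (intro mult_left_mono) (auto simp: algebra_simps)
  finally show ?thesis .
qed

text \<open>The absolute value of a Bochner integral is bounded by the nonnegative integral of the
  absolute value; this holds trivially when the function is not integrable.\<close>
lemma abs_LINT_le_nn_integral: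
  fixes \<phi> :: "real \<Rightarrow> real"
  shows "ennreal \<bar>LINT y|M. \<phi> y\<bar> \<le> (\<integral>\<^sup>+ y. ennreal \<bar>\<phi> y\<bar> \<partial>M)"
proof (cases "integrable M \<phi>")
  case True
  have "\<bar>LINT y|M. \<phi> y\<bar> \<le> (LINT y|M. \<bar>\<phi> y\<bar>)" by (rule integral_abs_bound)
  also have "ennreal (LINT y|M. \<bar>\<phi> y\<bar>) = (\<integral>\<^sup>+ y. ennreal \<bar>\<phi> y\<bar> \<partial>M)"
    by (rule nn_integral_eq_integral[symmetric]) (use True in auto)
  finally show ?thesis by (simp add: ennreal_leI)
next
  case False thus ?thesis by (simp add: not_integrable_integral_eq)
qed

lemma le_adjacent_cell_sups:
  assumes "real_of_int n \<le> x" "x < real_of_int n + 2"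
  shows "ennreal (g x) \<le> cell_sup g n + cell_sup g (n + 1)"
proof (cases "x < real_of_int n + 1")
  case True
  hence "ennreal (g x) \<le> cell_sup g n" using assms unfolding cell_sup_def by (intro SUP_upper) auto
  thus ?thesis by (simp add: add_increasing2)
next
  case False
  hence "ennreal (g x) \<le> cell_sup g (n + 1)"
    using assms unfolding cell_sup_def by (intro SUP_upper) auto
  thus ?thesis by (simp add: add_increasing)
qed

lemma shifted_cell_sups_le_amalgam:
  assumes "finite F"
  shows "(\<Sum>m\<in>F. cell_sup g (m + j)) \<le> amalgam g"
proof -
  have "(\<Sum>m\<in>F. cell_sup g (m + j)) = (\<Sum>n\<in>(\<lambda>m. m + j) ` F. cell_sup g n)"
    by (subst sum.reindex) (auto simp: inj_on_def)
  also have "\<dots> = (\<Sum>\<^sub>\<infinity> n\<in>(\<lambda>m. m + j) ` F. cell_sup g n)"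
    using assms by (simp add: infsum_finite)
  also have "\<dots> \<le> amalgam g" unfolding amalgam_def
    by (rule infsum_mono_neutral) (auto simp: nonneg_summable_on_complete)
  finally show ?thesis .
qed

lemma measurable_cell_sup_floor [measurable]:
  fixes c :: real
  shows "(\<lambda>y. cell_sup g (\<lfloor>c - y\<rfloor> + j)) \<in> borel_measurable lborel"
proof -
  have floor_meas: "(\<lambda>y. \<lfloor>c - y\<rfloor>) \<in> measurable lborel (count_space UNIV)" by measurable
  show ?thesis
    by (rule measurable_compose_countable'[where g="\<lambda>y. \<lfloor>c - y\<rfloor>" and I=UNIV
          and f="\<lambda>i x. cell_sup g (i + j)"]) (use floor_meas in auto)
qed

lemma cell_sup_weighted_conv_le:
  fixes u f :: "real \<Rightarrow> real" and e :: real
  assumes e: "e \<ge> 0"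
  shows "cell_sup (\<lambda>x. (1 + \<bar>x\<bar> powr e) * \<bar>LINT y|lborel. u (x - y) * f y\<bar>) m
    \<le> (\<integral>\<^sup>+ y. ennreal (2 powr e)
          * (cell_sup (\<lambda>x. (1 + \<bar>x\<bar> powr e) * \<bar>u x\<bar>) \<lfloor>real_of_int m - y\<rfloor>
             + cell_sup (\<lambda>x. (1 + \<bar>x\<bar> powr e) * \<bar>u x\<bar>) (\<lfloor>real_of_int m - y\<rfloor> + 1))
          * ennreal ((1 + \<bar>y\<bar> powr e) * \<bar>f y\<bar>) \<partial>lborel)"
    (is "_ \<le> (\<integral>\<^sup>+ y. ?B y \<partial>lborel)")
  unfolding cell_sup_def[of "\<lambda>x. (1 + \<bar>x\<bar> powr e) * \<bar>LINT y|lborel. u (x - y) * f y\<bar>"]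
proof (rule SUP_least)
  let ?U = "\<lambda>x. (1 + \<bar>x\<bar> powr e) * \<bar>u x\<bar>"
  fix z assume z: "z \<in> {real_of_int m..<real_of_int m + 1}"
  have "ennreal ((1 + \<bar>z\<bar> powr e) * \<bar>LINT y|lborel. u (z - y) * f y\<bar>)
      = ennreal \<bar>LINT y|lborel. (1 + \<bar>z\<bar> powr e) * (u (z - y) * f y)\<bar>"
    by (simp add: abs_mult)
  also have "\<dots> \<le> (\<integral>\<^sup>+ y. ennreal \<bar>(1 + \<bar>z\<bar> powr e) * (u (z - y) * f y)\<bar> \<partial>lborel)"
    by (rule abs_LINT_le_nn_integral)
  also have "\<dots> \<le> (\<integral>\<^sup>+ y. ?B y \<partial>lborel)"
  proof (rule nn_integral_mono)
    fix y
    let ?n = "\<lfloor>real_of_int m - y\<rfloor>"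
    have adjacent: "ennreal (?U (z - y)) \<le> cell_sup ?U ?n + cell_sup ?U (?n + 1)"
    proof (rule le_adjacent_cell_sups)
      show "real_of_int ?n \<le> z - y" "z - y < real_of_int ?n + 2" using z by auto linarith+
    qed
    have "\<bar>(1 + \<bar>z\<bar> powr e) * (u (z - y) * f y)\<bar> = (1 + \<bar>z\<bar> powr e) * (\<bar>u (z - y)\<bar> * \<bar>f y\<bar>)"
      by (simp add: abs_mult)
    also have "\<dots> \<le> (2 powr e * ((1 + \<bar>z - y\<bar> powr e) * (1 + \<bar>y\<bar> powr e))) * (\<bar>u (z - y)\<bar> * \<bar>f y\<bar>)"
      by (intro mult_right_mono weight_submult e) simp
    also have "\<dots> = 2 powr e * ?U (z - y) * ((1 + \<bar>y\<bar> powr e) * \<bar>f y\<bar>)"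
      by (simp add: algebra_simps)
    finally have "ennreal \<bar>(1 + \<bar>z\<bar> powr e) * (u (z - y) * f y)\<bar>
        \<le> ennreal (2 powr e * ?U (z - y) * ((1 + \<bar>y\<bar> powr e) * \<bar>f y\<bar>))"
      by (rule ennreal_leI)
    also have "\<dots> = ennreal (2 powr e) * ennreal (?U (z - y)) * ennreal ((1 + \<bar>y\<bar> powr e) * \<bar>f y\<bar>)"
      by (simp add: ennreal_mult[symmetric])
    also have "\<dots> \<le> ?B y"
      by (intro mult_right_mono mult_left_mono adjacent) auto
    finally show "ennreal \<bar>(1 + \<bar>z\<bar> powr e) * (u (z - y) * f y)\<bar> \<le> ?B y" .
  qed
  finally show "ennreal ((1 + \<bar>z\<bar> powr e) * \<bar>LINT y|lborel. u (z - y) * f y\<bar>) \<le> (\<integral>\<^sup>+ y. ?B y \<partial>lborel)" .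
qed

lemma amalgam_weighted_conv_le:
  fixes u f :: "real \<Rightarrow> real" and e :: real
  assumes e: "e \<ge> 0" and f_meas [measurable]: "f \<in> borel_measurable lborel"
  shows "amalgam (\<lambda>x. (1 + \<bar>x\<bar> powr e) * \<bar>LINT y|lborel. u (x - y) * f y\<bar>)
    \<le> ennreal (2 powr e) * (2 * amalgam (\<lambda>x. (1 + \<bar>x\<bar> powr e) * \<bar>u x\<bar>))
       * (\<integral>\<^sup>+ y. ennreal ((1 + \<bar>y\<bar> powr e) * \<bar>f y\<bar>) \<partial>lborel)"
proof -
  let ?U = "\<lambda>x. (1 + \<bar>x\<bar> powr e) * \<bar>u x\<bar>" and ?H = "\<lambda>y. (1 + \<bar>y\<bar> powr e) * \<bar>f y\<bar>"
  let ?C = "ennreal (2 powr e) * (2 * amalgam ?U)"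
  let ?B = "\<lambda>m y. ennreal (2 powr e) * (cell_sup ?U \<lfloor>real_of_int m - y\<rfloor>
                    + cell_sup ?U (\<lfloor>real_of_int m - y\<rfloor> + 1)) * ennreal (?H y)"
  have finite_sums: "(\<Sum>m\<in>F. cell_sup (\<lambda>x. (1 + \<bar>x\<bar> powr e) * \<bar>LINT y|lborel. u (x - y) * f y\<bar>) m)
      \<le> ?C * (\<integral>\<^sup>+ y. ennreal (?H y) \<partial>lborel)" if F: "finite F" for F :: "int set"
  proof -
    have floor_shift: "\<lfloor>real_of_int m - y\<rfloor> = m + \<lfloor>- y\<rfloor>" for m y
      by (metis add.commute diff_conv_add_uminus floor_add_int)
    have "(\<Sum>m\<in>F. cell_sup (\<lambda>x. (1 + \<bar>x\<bar> powr e) * \<bar>LINT y|lborel. u (x - y) * f y\<bar>) m)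
        \<le> (\<Sum>m\<in>F. \<integral>\<^sup>+ y. ?B m y \<partial>lborel)"
      by (intro sum_mono cell_sup_weighted_conv_le e)
    also have "\<dots> = (\<integral>\<^sup>+ y. (\<Sum>m\<in>F. ?B m y) \<partial>lborel)"
      using measurable_cell_sup_floor[of ?U _ 0] by (intro nn_integral_sum[symmetric]) auto
    also have "\<dots> \<le> (\<integral>\<^sup>+ y. ?C * ennreal (?H y) \<partial>lborel)"
    proof (rule nn_integral_mono)
      fix y
      have "(\<Sum>m\<in>F. ?B m y) = ennreal (2 powr e) * ((\<Sum>m\<in>F. cell_sup ?U (m + \<lfloor>- y\<rfloor>))
          + (\<Sum>m\<in>F. cell_sup ?U (m + (\<lfloor>- y\<rfloor> + 1)))) * ennreal (?H y)"
        unfolding floor_shift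
        by (simp only: sum.distrib[symmetric] sum_distrib_left sum_distrib_right add.assoc)
      also have "\<dots> \<le> ?C * ennreal (?H y)"
        using add_mono[OF shifted_cell_sups_le_amalgam[OF F] shifted_cell_sups_le_amalgam[OF F]]
        by (intro mult_right_mono mult_left_mono) (auto simp: mult_2)
      finally show "(\<Sum>m\<in>F. ?B m y) \<le> ?C * ennreal (?H y)" .
    qed
    also have "\<dots> = ?C * (\<integral>\<^sup>+ y. ennreal (?H y) \<partial>lborel)"
      by (rule nn_integral_cmult) auto
    finally show ?thesis .
  qed
  show ?thesis unfolding amalgam_def[of "\<lambda>x. (1 + \<bar>x\<bar> powr e) * \<bar>LINT y|lborel. u (x - y) * f y\<bar>"]
    by (rule infsum_le_finite_sums) (use finite_sums in \<open>auto simp: nonneg_summable_on_complete\<close>)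
qed

lemma conv_pow_Suc:
  assumes "k \<ge> 1"
  shows "conv_pow f (Suc k) = (\<lambda>x. LINT y|lborel. conv_pow f k (x - y) * f y)"
  using assms by (cases k) auto

lemma amalgam_gfun_Suc_finite:
  fixes f :: "real \<Rightarrow> real" and e :: real
  assumes f_int: "integrable lborel f" and e: "e \<ge> 0"
    and moment: "integrable lborel (\<lambda>y. \<bar>y\<bar> powr e * \<bar>f y\<bar>)"
    and k: "k \<ge> 1" and fin: "amalgam (gfun f e k) < \<infinity>"
  shows "amalgam (gfun f e (Suc k)) < \<infinity>"
proof -
  let ?H = "\<lambda>y. (1 + \<bar>y\<bar> powr e) * \<bar>f y\<bar>"
  have "integrable lborel ?H"
    unfolding distrib_right using f_int moment by (auto intro!: integrable_add)
  hence H_fin: "(\<integral>\<^sup>+ y. ennreal (?H y) \<partial>lborel) < \<infinity>"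
    by (simp add: nn_integral_eq_integral)
  have "amalgam (gfun f e (Suc k))
      \<le> ennreal (2 powr e) * (2 * amalgam (gfun f e k)) * (\<integral>\<^sup>+ y. ennreal (?H y) \<partial>lborel)"
    using amalgam_weighted_conv_le[of e f "conv_pow f k"] e f_int
    unfolding gfun_def[abs_def] conv_pow_Suc[OF k] by auto
  also have "\<dots> < \<infinity>" using fin H_fin by (simp add: ennreal_mult_less_top less_top)
  finally show ?thesis .
qed

theorem mainTheorem14:
  fixes f :: "real \<Rightarrow> real" and \<epsilon> :: real and kbar :: nat
  assumes "integrable lborel f"
    and "\<epsilon> > 0"
    and "integrable lborel (\<lambda>y. \<bar>y\<bar> powr \<epsilon> * \<bar>f y\<bar>)"
    and "kbar \<ge> 1"
    and "(\<Sum>\<^sub>\<infinity> m::int. (SUP z\<in>{real_of_int m..<real_of_int m + 1}. ennreal (gfun f \<epsilon> kbar z))) < \<infinity>"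
  shows "\<forall>k\<ge>kbar. (\<Sum>\<^sub>\<infinity> m::int. (SUP z\<in>{real_of_int m..<real_of_int m + 1}. ennreal (gfun f \<epsilon> k z))) < \<infinity>"
proof (intro allI impI)
  fix k assume "kbar \<le> k"
  then have "amalgam (gfun f \<epsilon> k) < \<infinity>"
  proof (induction k rule: dec_induct)
    case base
    then show ?case using assms(5) by (simp add: amalgam_def cell_sup_def)
  next
    case (step k)
    then show ?case using amalgam_gfun_Suc_finite[OF assms(1) _ assms(3)] assms(2,4) by simp
  qed
  then show "(\<Sum>\<^sub>\<infinity> m::int. (SUP z\<in>{real_of_int m..<real_of_int m + 1}. ennreal (gfun f \<epsilon> k z))) < \<infinity>"
    by (simp add: amalgam_def cell_sup_def)
qed

end
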